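(* Let $G$ be a graph on $\{1,\dots,n\}$, $(S_1,\dots,S_n)$ a realization of $G$, and $w\in\mathbb{R}^n_{\ge0}$. For positive integers $k$ define $\beta(G,w,k)=\max_\rho\sum_{i=1}^nw_i|\operatorname{tr}(\rho S_i)|^k$, maximum over density matrices $\rho$. Then $\lim_{k\to\infty}\beta(G,w,k)=\alpha(G,w)$.
   Context: A realization of $G$ is a tuple of Pauli strings (tensor products of matrices from $\{I,X,Y,Z\}$) of common length with $S_i,S_j$ anticommuting iff $i\sim j$ in $G$ and commuting otherwise. $\alpha(G,w)=\max\{\sum_{i\in I}w_i:I\text{ an independent set of }G\}$. *)

theory Defs
  imports Complex_Main "Jordan_Normal_Form.Matrix"
begin

datatype pauli = PI | PX | PY | PZ

definition pauli_mat :: "pauli \<Rightarrow> complex mat" where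
  "pauli_mat p = (case p of
      PI \<Rightarrow> mat_of_rows_list 2 [[1, 0], [0, 1]]
    | PX \<Rightarrow> mat_of_rows_list 2 [[0, 1], [1, 0]]
    | PY \<Rightarrow> mat_of_rows_list 2 [[0, -\<i>], [\<i>, 0]]
    | PZ \<Rightarrow> mat_of_rows_list 2 [[1, 0], [0, -1]])"

definition kron :: "complex mat \<Rightarrow> complex mat \<Rightarrow> complex mat" where
  "kron A B = mat (dim_row A * dim_row B) (dim_col A * dim_col B)
     (\<lambda>(i, j). A $$ (i div dim_row B, j div dim_col B) * B $$ (i mod dim_row B, j mod dim_col B))"

definition pauli_string_mat :: "pauli list \<Rightarrow> complex mat" where
  "pauli_string_mat ps = foldr (\<lambda>p M. kron (pauli_mat p) M) ps (1\<^sub>m 1)"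

definition is_graph :: "nat \<Rightarrow> (nat \<Rightarrow> nat \<Rightarrow> bool) \<Rightarrow> bool" where
  "is_graph n E \<longleftrightarrow> (\<forall>i<n. \<forall>j<n. E i j \<longleftrightarrow> E j i) \<and> (\<forall>i<n. \<not> E i i)"

definition realization :: "nat \<Rightarrow> (nat \<Rightarrow> nat \<Rightarrow> bool) \<Rightarrow> (nat \<Rightarrow> pauli list) \<Rightarrow> bool" where
  "realization n E S \<longleftrightarrow>
     (\<exists>m. \<forall>i<n. length (S i) = m) \<and>
     (\<forall>i<n. \<forall>j<n.
        (E i j \<longrightarrow> pauli_string_mat (S i) * pauli_string_mat (S j)
                    = - (pauli_string_mat (S j) * pauli_string_mat (S i))) \<and>
        (\<not> E i j \<longrightarrow> pauli_string_mat (S i) * pauli_string_mat (S j)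
                    = pauli_string_mat (S j) * pauli_string_mat (S i)))"

definition mtrace :: "complex mat \<Rightarrow> complex" where
  "mtrace A = (\<Sum>i<dim_row A. A $$ (i, i))"

definition density_matrix :: "nat \<Rightarrow> complex mat \<Rightarrow> bool" where
  "density_matrix d \<rho> \<longleftrightarrow>
     \<rho> \<in> carrier_mat d d \<and>
     (\<forall>i<d. \<forall>j<d. \<rho> $$ (j, i) = cnj (\<rho> $$ (i, j))) \<and>
     (\<forall>v \<in> carrier_vec d. Re (\<Sum>i<d. cnj (v $ i) * (\<rho> *\<^sub>v v) $ i) \<ge> 0) \<and>
     mtrace \<rho> = 1"

definition beta :: "nat \<Rightarrow> (nat \<Rightarrow> pauli list) \<Rightarrow> (nat \<Rightarrow> real) \<Rightarrow> nat \<Rightarrow> real" where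
  "beta n S w k = Sup {(\<Sum>i<n. w i * cmod (mtrace (\<rho> * pauli_string_mat (S i))) ^ k) | \<rho>.
       density_matrix (2 ^ length (S 0)) \<rho>}"

definition independent_set :: "nat \<Rightarrow> (nat \<Rightarrow> nat \<Rightarrow> bool) \<Rightarrow> nat set \<Rightarrow> bool" where
  "independent_set n E I \<longleftrightarrow> I \<subseteq> {0..<n} \<and> (\<forall>i\<in>I. \<forall>j\<in>I. \<not> E i j)"

definition alpha :: "nat \<Rightarrow> (nat \<Rightarrow> nat \<Rightarrow> bool) \<Rightarrow> (nat \<Rightarrow> real) \<Rightarrow> real" where
  "alpha n E w = Max {(\<Sum>i\<in>I. w i) | I. independent_set n E I}"

end

(*
  Write <A> = tr (rho A). For a Hermitian C with C * C = s * 1, the variance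
  <(C - <C>)^2> = s - <C>^2 is nonnegative, so <C>^2 <= s. Taking C = S_i gives
  |<S_i>| <= 1; taking C = a S_i + b S_j with a = <S_i>, b = <S_j> for anticommuting
  S_i, S_j gives C * C = (a^2 + b^2) * 1 and <C> = a^2 + b^2, hence a^2 + b^2 <= 1.
  So the vertices with <S_i>^2 > 1/2 form an independent set, and
  sum_i w_i |<S_i>|^k <= alpha(G, w) + (sum_i w_i) * 2^(-k/2).
  Conversely, the Pauli strings of a maximum-weight independent set commute and square
  to 1, so they have a common eigenvector; in the corresponding pure state
  |<S_i>| = 1 on that set, whence beta(G, w, k) >= alpha(G, w).
*)
theory Submission
  imports Defs
begin

section \<open>Kronecker products and Pauli strings\<close>

lemma sum_lessThan_mult: "(\<Sum>k<p*(q::nat). f k) = (\<Sum>a<p. \<Sum>b<q. f (a*q+b))"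
  by (simp add: sum.nat_group[symmetric] sum.atLeastLessThan_shift_0 atLeast0LessThan comp_def add.commute)

lemma dim_row_kron [simp]: "dim_row (kron A B) = dim_row A * dim_row B"
  and dim_col_kron [simp]: "dim_col (kron A B) = dim_col A * dim_col B"
  by (simp_all add: kron_def)

lemma index_kron:
  assumes "i < dim_row A * dim_row B" "j < dim_col A * dim_col B"
  shows "kron A B $$ (i, j) =
    A $$ (i div dim_row B, j div dim_col B) * B $$ (i mod dim_row B, j mod dim_col B)"
  using assms by (simp add: kron_def)

lemma less_mult_div_mod:
  fixes i p q :: nat
  assumes "i < p * q"
  shows "i div q < p" "i mod q < q"
  using assms by (simp_all add: less_mult_imp_div_less) (cases "q = 0"; simp)

lemma kron_mult:
  assumes "dim_col A = dim_row C" "dim_col B = dim_row D"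
  shows "kron A B * kron C D = kron (A * C) (B * D)"
proof (rule eq_matI)
  fix i j assume "i < dim_row (kron (A * C) (B * D))" "j < dim_col (kron (A * C) (B * D))"
  then have i: "i < dim_row A * dim_row B" and j: "j < dim_col C * dim_col D" by simp_all
  let ?p = "dim_row C" and ?q = "dim_row D"
  have "(kron A B * kron C D) $$ (i, j) = (\<Sum>k < ?p * ?q. kron A B $$ (i, k) * kron C D $$ (k, j))"
    using i j assms by (simp add: scalar_prod_def atLeast0LessThan)
  also have "\<dots> = (\<Sum>a < ?p. \<Sum>b < ?q. kron A B $$ (i, a * ?q + b) * kron C D $$ (a * ?q + b, j))"
    by (rule sum_lessThan_mult)
  also have "\<dots> = (\<Sum>a < ?p. \<Sum>b < ?q.
      (A $$ (i div dim_row B, a) * C $$ (a, j div dim_col D)) *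
      (B $$ (i mod dim_row B, b) * D $$ (b, j mod dim_col D)))"
  proof (intro sum.cong refl)
    fix a b assume "a \<in> {..<?p}" "b \<in> {..<?q}"
    then have "a * ?q + b < ?p * ?q"
      by (metis lessThan_iff add_less_cancel_left less_le_trans mult_Suc mult_le_mono1 Suc_leI add.commute)
    then show "kron A B $$ (i, a * ?q + b) * kron C D $$ (a * ?q + b, j) =
      (A $$ (i div dim_row B, a) * C $$ (a, j div dim_col D)) *
      (B $$ (i mod dim_row B, b) * D $$ (b, j mod dim_col D))"
      using i j assms \<open>b \<in> {..<?q}\<close> by (simp add: index_kron)
  qed
  also have "\<dots> = (A * C) $$ (i div dim_row B, j div dim_col D) * (B * D) $$ (i mod dim_row B, j mod dim_col D)"
    using assms less_mult_div_mod[OF i] less_mult_div_mod[OF j]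
    by (simp add: sum_product scalar_prod_def atLeast0LessThan)
  also have "\<dots> = kron (A * C) (B * D) $$ (i, j)"
    using i j by (simp add: index_kron)
  finally show "(kron A B * kron C D) $$ (i, j) = kron (A * C) (B * D) $$ (i, j)" .
qed simp_all

lemma kron_one: "kron (1\<^sub>m p) (1\<^sub>m q) = 1\<^sub>m (p * q)"
proof (rule eq_matI)
  fix i j assume "i < dim_row (1\<^sub>m (p * q))" "j < dim_col (1\<^sub>m (p * q))"
  then have i: "i < p * q" and j: "j < p * q" by simp_all
  have "i = j \<longleftrightarrow> i div q = j div q \<and> i mod q = j mod q"
    by (metis div_mult_mod_eq)
  then show "kron (1\<^sub>m p) (1\<^sub>m q) $$ (i, j) = 1\<^sub>m (p * q) $$ (i, j)"
    using i j less_mult_div_mod[OF i] less_mult_div_mod[OF j] by (auto simp: index_kron)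
qed simp_all

definition hermitian :: "complex mat \<Rightarrow> bool" where
  "hermitian A \<longleftrightarrow> (\<forall>i<dim_row A. \<forall>j<dim_row A. A $$ (j, i) = cnj (A $$ (i, j)))"

lemma hermitianD: "hermitian A \<Longrightarrow> i < dim_row A \<Longrightarrow> j < dim_row A \<Longrightarrow> A $$ (j, i) = cnj (A $$ (i, j))"
  unfolding hermitian_def by blast

lemma hermitian_kron:
  assumes "A \<in> carrier_mat p p" "B \<in> carrier_mat q q" "hermitian A" "hermitian B"
  shows "hermitian (kron A B)"
  unfolding hermitian_def
proof (intro allI impI)
  fix i j assume "i < dim_row (kron A B)" "j < dim_row (kron A B)"
  then have i: "i < p * q" and j: "j < p * q" using assms(1,2) by simp_all
  have "kron A B $$ (j, i) = A $$ (j div q, i div q) * B $$ (j mod q, i mod q)"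
    using i j assms(1,2) by (simp add: index_kron)
  also have "\<dots> = cnj (A $$ (i div q, j div q)) * cnj (B $$ (i mod q, j mod q))"
    using assms(1,2) less_mult_div_mod[OF i] less_mult_div_mod[OF j]
      hermitianD[OF assms(3), of "i div q" "j div q"] hermitianD[OF assms(4), of "i mod q" "j mod q"]
    by simp
  also have "\<dots> = cnj (kron A B $$ (i, j))"
    using i j assms(1,2) by (simp add: index_kron)
  finally show "kron A B $$ (j, i) = cnj (kron A B $$ (i, j))" .
qed

lemma pauli_mat_carrier: "pauli_mat p \<in> carrier_mat 2 2"
  by (cases p) (auto simp: pauli_mat_def mat_of_rows_list_def)

lemma all_less_two: "(\<forall>i<Suc (Suc 0). P i) \<longleftrightarrow> P 0 \<and> P (Suc 0)"
  by (auto simp: less_Suc_eq)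

lemma hermitian_pauli_mat: "hermitian (pauli_mat p)"
  by (cases p) (simp_all add: hermitian_def pauli_mat_def mat_of_rows_list_def all_less_two)

lemma pauli_mat_square: "pauli_mat p * pauli_mat p = 1\<^sub>m 2"
  by (cases p) (auto intro!: eq_matI simp: pauli_mat_def mat_of_rows_list_def scalar_prod_def
      numeral_2_eq_2 less_Suc_eq)

lemma pauli_string_mat_Cons: "pauli_string_mat (p # ps) = kron (pauli_mat p) (pauli_string_mat ps)"
  by (simp add: pauli_string_mat_def)

lemma pauli_string_mat_carrier: "pauli_string_mat ps \<in> carrier_mat (2 ^ length ps) (2 ^ length ps)"
proof (induction ps)
  case Nil
  show ?case by (simp add: pauli_string_mat_def)
next
  case (Cons p ps)
  have "dim_row (pauli_string_mat (p # ps)) = 2 ^ length (p # ps)"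
    "dim_col (pauli_string_mat (p # ps)) = 2 ^ length (p # ps)"
    using Cons.IH pauli_mat_carrier[of p] by (auto simp: pauli_string_mat_Cons)
  then show ?case by (rule carrier_matI)
qed

lemma hermitian_pauli_string_mat: "hermitian (pauli_string_mat ps)"
proof (induction ps)
  case Nil
  show ?case by (simp add: pauli_string_mat_def hermitian_def)
next
  case (Cons p ps)
  show ?case
    unfolding pauli_string_mat_Cons
    by (rule hermitian_kron[OF pauli_mat_carrier pauli_string_mat_carrier hermitian_pauli_mat Cons.IH])
qed

lemma pauli_string_mat_square: "pauli_string_mat ps * pauli_string_mat ps = 1\<^sub>m (2 ^ length ps)"
proof (induction ps)
  case (Cons p ps)
  then show ?case
    using pauli_mat_carrier[of p] pauli_string_mat_carrier[of ps]
    by (simp add: pauli_string_mat_Cons kron_mult pauli_mat_square kron_one)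
qed (simp add: pauli_string_mat_def)

section \<open>Expectation values in a density matrix\<close>

lemma mtrace_mult:
  assumes "A \<in> carrier_mat d d" "B \<in> carrier_mat d d"
  shows "mtrace (A * B) = (\<Sum>i<d. \<Sum>k<d. A $$ (i, k) * B $$ (k, i))"
  using assms by (simp add: mtrace_def scalar_prod_def atLeast0LessThan)

lemma mtrace_add: "A \<in> carrier_mat d d \<Longrightarrow> B \<in> carrier_mat d d \<Longrightarrow> mtrace (A + B) = mtrace A + mtrace B"
  by (simp add: mtrace_def sum.distrib)

lemma mtrace_minus: "A \<in> carrier_mat d d \<Longrightarrow> B \<in> carrier_mat d d \<Longrightarrow> mtrace (A - B) = mtrace A - mtrace B"
  by (simp add: mtrace_def sum_subtractf)

lemma mtrace_smult: "A \<in> carrier_mat d d \<Longrightarrow> mtrace (c \<cdot>\<^sub>m A) = c * mtrace A"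
  by (simp add: mtrace_def sum_distrib_left)

lemma mtrace_mult_add_right:
  assumes "R \<in> carrier_mat d d" "A \<in> carrier_mat d d" "B \<in> carrier_mat d d"
  shows "mtrace (R * (A + B)) = mtrace (R * A) + mtrace (R * B)"
  using assms by (simp add: mult_add_distrib_mat[OF assms] mtrace_add[of _ d])

lemma mtrace_mult_minus_right:
  assumes "R \<in> carrier_mat d d" "A \<in> carrier_mat d d" "B \<in> carrier_mat d d"
  shows "mtrace (R * (A - B)) = mtrace (R * A) - mtrace (R * B)"
  using assms by (simp add: mult_minus_distrib_mat[OF assms] mtrace_minus[of _ d])

lemma mtrace_mult_smult_right:
  assumes "R \<in> carrier_mat d d" "A \<in> carrier_mat d d"
  shows "mtrace (R * (c \<cdot>\<^sub>m A)) = c * mtrace (R * A)"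
  using assms by (simp add: mult_smult_distrib[OF assms] mtrace_smult[of _ d])

lemma density_matrix_carrier: "density_matrix d \<rho> \<Longrightarrow> \<rho> \<in> carrier_mat d d"
  unfolding density_matrix_def by blast

lemma density_matrix_hermitian: "density_matrix d \<rho> \<Longrightarrow> hermitian \<rho>"
  unfolding density_matrix_def hermitian_def by auto

lemma mtrace_density_matrix: "density_matrix d \<rho> \<Longrightarrow> mtrace \<rho> = 1"
  unfolding density_matrix_def by blast

lemma mtrace_density_matrix_hermitian_real:
  assumes \<rho>: "density_matrix d \<rho>" and A: "A \<in> carrier_mat d d" "hermitian A"
  shows "mtrace (\<rho> * A) \<in> \<real>"
proof -
  have \<rho>d: "\<rho> \<in> carrier_mat d d" "hermitian \<rho>"
    using \<rho> by (simp_all add: density_matrix_carrier density_matrix_hermitian)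
  have "cnj (mtrace (\<rho> * A)) = (\<Sum>i<d. \<Sum>k<d. \<rho> $$ (k, i) * A $$ (i, k))"
    unfolding mtrace_mult[OF \<rho>d(1) A(1)]
  proof (simp only: cnj_sum complex_cnj_mult, intro sum.cong refl)
    fix i k assume "i \<in> {..<d}" "k \<in> {..<d}"
    then show "cnj (\<rho> $$ (i, k)) * cnj (A $$ (k, i)) = \<rho> $$ (k, i) * A $$ (i, k)"
      using \<rho>d A hermitianD[of \<rho> i k] hermitianD[of A k i] by simp
  qed
  also have "\<dots> = mtrace (\<rho> * A)"
    unfolding mtrace_mult[OF \<rho>d(1) A(1)] by (rule sum.swap)
  finally show ?thesis by (simp add: Reals_cnj_iff)
qed

lemma density_matrix_psd:
  "density_matrix d \<rho> \<Longrightarrow> v \<in> carrier_vec d \<Longrightarrow> 0 \<le> Re (\<Sum>i<d. cnj (v $ i) * (\<rho> *\<^sub>v v) $ i)"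
  unfolding density_matrix_def by blast

lemma mtrace_density_matrix_square_nonneg:
  assumes \<rho>: "density_matrix d \<rho>" and X: "X \<in> carrier_mat d d" "hermitian X"
  shows "0 \<le> Re (mtrace (\<rho> * (X * X)))"
proof -
  have \<rho>d: "\<rho> \<in> carrier_mat d d" using \<rho> by (rule density_matrix_carrier)
  \<comment> \<open>Hermitian \<open>X\<close> gives \<open>tr (\<rho> X X) = \<Sum>\<^sub>l x\<^sub>l\<^sup>* \<rho> x\<^sub>l\<close> over the columns \<open>x\<^sub>l\<close> of \<open>X\<close>.\<close>
  have "mtrace (\<rho> * (X * X)) = (\<Sum>i<d. \<Sum>k<d. \<Sum>l<d. X $$ (l, i) * \<rho> $$ (i, k) * X $$ (k, l))"
    using X \<rho>d by (simp add: mtrace_mult[OF \<rho>d] scalar_prod_def atLeast0LessThan sum_distrib_left mult_ac)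
  also have "\<dots> = (\<Sum>i<d. \<Sum>l<d. \<Sum>k<d. X $$ (l, i) * \<rho> $$ (i, k) * X $$ (k, l))"
    by (intro sum.cong refl sum.swap)
  also have "\<dots> = (\<Sum>l<d. \<Sum>i<d. \<Sum>k<d. X $$ (l, i) * \<rho> $$ (i, k) * X $$ (k, l))"
    by (rule sum.swap)
  also have "\<dots> = (\<Sum>l<d. \<Sum>i<d. cnj (col X l $ i) * (\<rho> *\<^sub>v col X l) $ i)"
  proof (intro sum.cong refl)
    fix l i assume "l \<in> {..<d}" "i \<in> {..<d}"
    then show "(\<Sum>k<d. X $$ (l, i) * \<rho> $$ (i, k) * X $$ (k, l)) = cnj (col X l $ i) * (\<rho> *\<^sub>v col X l) $ i"
      using X \<rho>d hermitianD[of X i l]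
      by (simp add: scalar_prod_def atLeast0LessThan sum_distrib_left mult_ac)
  qed
  finally have "Re (mtrace (\<rho> * (X * X))) = (\<Sum>l<d. Re (\<Sum>i<d. cnj (col X l $ i) * (\<rho> *\<^sub>v col X l) $ i))"
    by simp
  also have "\<dots> \<ge> 0"
    using X by (intro sum_nonneg density_matrix_psd[OF \<rho>]) simp
  finally show ?thesis .
qed

lemma Re_mtrace_density_matrix_sq_le:
  assumes \<rho>: "density_matrix d \<rho>" and C: "C \<in> carrier_mat d d" "hermitian C"
    and C_sq: "C * C = complex_of_real s \<cdot>\<^sub>m 1\<^sub>m d"
  shows "(Re (mtrace (\<rho> * C)))\<^sup>2 \<le> s"
proof -
  have \<rho>d: "\<rho> \<in> carrier_mat d d" using \<rho> by (rule density_matrix_carrier)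
  define c where "c = mtrace (\<rho> * C)"
  have c_real: "c \<in> \<real>" unfolding c_def by (rule mtrace_density_matrix_hermitian_real[OF \<rho> C])
  \<comment> \<open>Variance: \<open>0 \<le> tr (\<rho> X\<^sup>2) = s - c\<^sup>2\<close> for the centred observable \<open>X = C - c\<close>.\<close>
  define X where "X = C - c \<cdot>\<^sub>m 1\<^sub>m d"
  have cI: "c \<cdot>\<^sub>m 1\<^sub>m d \<in> carrier_mat d d" by simp
  have X: "X \<in> carrier_mat d d" unfolding X_def using cI by (rule minus_carrier_mat)
  have "hermitian X"
    unfolding hermitian_def
  proof (intro allI impI)
    fix i j assume "i < dim_row X" "j < dim_row X"
    then have "i < d" "j < d" using X by simp_all
    then show "X $$ (j, i) = cnj (X $$ (i, j))"
      using C hermitianD[of C i j] c_real by (auto simp: X_def Reals_cnj_iff)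
  qed
  have CX: "C * X = C * C - c \<cdot>\<^sub>m C"
    using C(1) by (simp add: X_def mult_minus_distrib_mat[OF C(1) C(1) cI]
        mult_smult_distrib[OF C(1) one_carrier_mat])
  have XX: "X * X = C * X - c \<cdot>\<^sub>m X"
    using minus_mult_distrib_mat[OF C(1) cI X] X
    by (simp add: X_def[symmetric] mult_smult_assoc_mat[OF one_carrier_mat X])
  have "mtrace (\<rho> * X) = 0"
    using \<rho>d C(1) by (simp add: X_def mtrace_mult_minus_right[OF \<rho>d C(1) cI]
        mtrace_mult_smult_right[of _ d] mtrace_density_matrix[OF \<rho>] c_def[symmetric])
  moreover have "mtrace (\<rho> * (C * X)) = s - c * c"
    using \<rho>d C(1) by (simp add: CX mtrace_mult_minus_right[of _ d] mtrace_mult_smult_right[of _ d]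
        C_sq mtrace_density_matrix[OF \<rho>] c_def[symmetric])
  ultimately have "mtrace (\<rho> * (X * X)) = s - c * c"
    using \<rho>d C(1) X by (simp add: XX mtrace_mult_minus_right[of _ d] mtrace_mult_smult_right[of _ d])
  moreover have "0 \<le> Re (mtrace (\<rho> * (X * X)))"
    by (rule mtrace_density_matrix_square_nonneg[OF \<rho> X \<open>hermitian X\<close>])
  ultimately show ?thesis
    using c_real by (simp add: c_def complex_is_Real_iff power2_eq_square)
qed

lemma smult_mult_smult_mat:
  fixes A B :: "'a :: comm_ring_1 mat"
  assumes "A \<in> carrier_mat nr n" "B \<in> carrier_mat n nc"
  shows "(a \<cdot>\<^sub>m A) * (b \<cdot>\<^sub>m B) = (a * b) \<cdot>\<^sub>m (A * B)"
  using assms by (auto intro!: eq_matI simp: mult_smult_assoc_mat mult_smult_distrib)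

lemma anticommuting_involutions_combination_square:
  fixes A B :: "'a :: comm_ring_1 mat"
  assumes A: "A \<in> carrier_mat d d" "A * A = 1\<^sub>m d" and B: "B \<in> carrier_mat d d" "B * B = 1\<^sub>m d"
    and anti: "A * B = - (B * A)"
  shows "(a \<cdot>\<^sub>m A + b \<cdot>\<^sub>m B) * (a \<cdot>\<^sub>m A + b \<cdot>\<^sub>m B) = (a * a + b * b) \<cdot>\<^sub>m 1\<^sub>m d"
proof -
  have "(a \<cdot>\<^sub>m A + b \<cdot>\<^sub>m B) * (a \<cdot>\<^sub>m A + b \<cdot>\<^sub>m B) =
      (a * a) \<cdot>\<^sub>m (A * A) + (a * b) \<cdot>\<^sub>m (A * B) + ((b * a) \<cdot>\<^sub>m (B * A) + (b * b) \<cdot>\<^sub>m (B * B))"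
  proof -
    have aA: "a \<cdot>\<^sub>m A \<in> carrier_mat d d" and bB: "b \<cdot>\<^sub>m B \<in> carrier_mat d d"
      using A(1) B(1) by simp_all
    show ?thesis
      by (simp only: add_mult_distrib_mat[OF aA bB add_carrier_mat[OF bB]]
          mult_add_distrib_mat[OF aA aA bB] mult_add_distrib_mat[OF bB aA bB]
          smult_mult_smult_mat[OF A(1) A(1)] smult_mult_smult_mat[OF A(1) B(1)]
          smult_mult_smult_mat[OF B(1) A(1)] smult_mult_smult_mat[OF B(1) B(1)])
  qed
  also have "\<dots> = (a * a + b * b) \<cdot>\<^sub>m 1\<^sub>m d"
    unfolding A(2) B(2) anti
    by (rule eq_matI) (use A(1) B(1) in \<open>auto simp: distrib_right mult.commute\<close>)
  finally show ?thesis .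
qed

lemma cmod_mtrace_density_matrix_involution_le:
  assumes \<rho>: "density_matrix d \<rho>" and A: "A \<in> carrier_mat d d" "hermitian A" "A * A = 1\<^sub>m d"
  shows "cmod (mtrace (\<rho> * A)) \<le> 1"
proof -
  have "A * A = complex_of_real 1 \<cdot>\<^sub>m 1\<^sub>m d"
    unfolding A(3) by (auto intro!: eq_matI)
  then have "(Re (mtrace (\<rho> * A)))\<^sup>2 \<le> 1"
    by (rule Re_mtrace_density_matrix_sq_le[OF \<rho> A(1,2)])
  moreover have "Im (mtrace (\<rho> * A)) = 0"
    using mtrace_density_matrix_hermitian_real[OF \<rho> A(1,2)] by (simp add: complex_is_Real_iff)
  ultimately show ?thesis by (simp add: cmod_eq_Re abs_square_le_1)
qed

lemma cmod_mtrace_density_matrix_anticommuting_le: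
  assumes \<rho>: "density_matrix d \<rho>"
    and A: "A \<in> carrier_mat d d" "hermitian A" "A * A = 1\<^sub>m d"
    and B: "B \<in> carrier_mat d d" "hermitian B" "B * B = 1\<^sub>m d"
    and anti: "A * B = - (B * A)"
  shows "(cmod (mtrace (\<rho> * A)))\<^sup>2 + (cmod (mtrace (\<rho> * B)))\<^sup>2 \<le> 1"
proof -
  have \<rho>d: "\<rho> \<in> carrier_mat d d" using \<rho> by (rule density_matrix_carrier)
  define a where "a = Re (mtrace (\<rho> * A))"
  define b where "b = Re (mtrace (\<rho> * B))"
  have ta: "mtrace (\<rho> * A) = complex_of_real a" and tb: "mtrace (\<rho> * B) = complex_of_real b"
    using mtrace_density_matrix_hermitian_real[OF \<rho> A(1,2)] mtrace_density_matrix_hermitian_real[OF \<rho> B(1,2)]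
    by (simp_all add: a_def b_def)
  define C where "C = complex_of_real a \<cdot>\<^sub>m A + complex_of_real b \<cdot>\<^sub>m B"
  have C: "C \<in> carrier_mat d d" using A(1) B(1) by (simp add: C_def)
  have "hermitian C"
    unfolding hermitian_def
  proof (intro allI impI)
    fix i j assume "i < dim_row C" "j < dim_row C"
    then have "i < d" "j < d" using C by simp_all
    then show "C $$ (j, i) = cnj (C $$ (i, j))"
      using A B hermitianD[of A i j] hermitianD[of B i j] by (simp add: C_def)
  qed
  moreover have "C * C = complex_of_real (a\<^sup>2 + b\<^sup>2) \<cdot>\<^sub>m 1\<^sub>m d"
    unfolding C_def anticommuting_involutions_combination_square[OF A(1,3) B(1,3) anti]
    by (simp add: power2_eq_square)
  ultimately have "(Re (mtrace (\<rho> * C)))\<^sup>2 \<le> a\<^sup>2 + b\<^sup>2"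
    by (rule Re_mtrace_density_matrix_sq_le[OF \<rho> C])
  moreover have "mtrace (\<rho> * C) = complex_of_real (a\<^sup>2 + b\<^sup>2)"
    using \<rho>d A(1) B(1)
    by (simp add: C_def mtrace_mult_add_right[of _ d] mtrace_mult_smult_right[of _ d] ta tb power2_eq_square)
  ultimately have "(a\<^sup>2 + b\<^sup>2) * (a\<^sup>2 + b\<^sup>2) \<le> (a\<^sup>2 + b\<^sup>2) * 1"
    by (simp add: power2_eq_square)
  then have "a\<^sup>2 + b\<^sup>2 \<le> 1"
    using sum_power2_ge_zero[of a b] by (cases "a\<^sup>2 + b\<^sup>2 = 0") (simp_all add: mult_le_cancel_left)
  then show ?thesis by (simp add: ta tb)
qed

section \<open>Common eigenvectors of commuting involutions\<close>

lemma involution_eigenvector: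
  fixes P :: "'a :: field mat"
  assumes P: "P \<in> carrier_mat d d" "P * P = 1\<^sub>m d" and v: "v \<in> carrier_vec d" and t: "t * t = 1"
  shows "P *\<^sub>v (v + t \<cdot>\<^sub>v (P *\<^sub>v v)) = t \<cdot>\<^sub>v (v + t \<cdot>\<^sub>v (P *\<^sub>v v))"
proof -
  have Pv: "P *\<^sub>v v \<in> carrier_vec d" using P(1) v by simp
  have "P *\<^sub>v (P *\<^sub>v v) = v"
    using assoc_mult_mat_vec[OF P(1) P(1) v] P(2) v by simp
  then have "P *\<^sub>v (v + t \<cdot>\<^sub>v (P *\<^sub>v v)) = P *\<^sub>v v + t \<cdot>\<^sub>v v"
    using P(1) v Pv by (simp add: mult_add_distrib_mat_vec[of _ d d] mult_mat_vec[of _ d d])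
  also have "\<dots> = t \<cdot>\<^sub>v (v + t \<cdot>\<^sub>v (P *\<^sub>v v))"
    using v Pv t by (simp add: smult_add_distrib_vec[of _ d] smult_smult_assoc comm_add_vec[of _ d])
  finally show ?thesis .
qed

lemma commuting_eigenvector:
  fixes P Q :: "'a :: field mat"
  assumes P: "P \<in> carrier_mat d d" and Q: "Q \<in> carrier_mat d d" and comm: "Q * P = P * Q"
    and v: "v \<in> carrier_vec d" and eig: "Q *\<^sub>v v = c \<cdot>\<^sub>v v"
  shows "Q *\<^sub>v (v + t \<cdot>\<^sub>v (P *\<^sub>v v)) = c \<cdot>\<^sub>v (v + t \<cdot>\<^sub>v (P *\<^sub>v v))"
proof -
  have Pv: "P *\<^sub>v v \<in> carrier_vec d" using P v by simp
  have "Q *\<^sub>v (P *\<^sub>v v) = c \<cdot>\<^sub>v (P *\<^sub>v v)"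
    using assoc_mult_mat_vec[OF Q P v] assoc_mult_mat_vec[OF P Q v] comm eig mult_mat_vec[OF P v]
    by simp
  then show ?thesis
    using Q v Pv eig
    by (simp add: mult_add_distrib_mat_vec[of _ d d] mult_mat_vec[of _ d d] smult_add_distrib_vec[of _ d]
        smult_smult_assoc mult.commute)
qed

lemma add_or_diff_nonzero_vec:
  fixes v w :: "'a :: field_char_0 vec"
  assumes "v \<in> carrier_vec d" "w \<in> carrier_vec d" "v \<noteq> 0\<^sub>v d"
  obtains t where "t = 1 \<or> t = -1" "v + t \<cdot>\<^sub>v w \<noteq> 0\<^sub>v d"
proof -
  have "\<exists>i<d. v $ i \<noteq> 0"
  proof (rule ccontr)
    assume "\<not> ?thesis"
    then have "v = 0\<^sub>v d" using assms(1) by (intro eq_vecI) auto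
    then show False using assms(3) by simp
  qed
  then obtain i where i: "i < d" "v $ i \<noteq> 0" by blast
  have nonzero: "v + t \<cdot>\<^sub>v w \<noteq> 0\<^sub>v d" if nz: "v $ i + t * w $ i \<noteq> 0" for t
  proof
    assume "v + t \<cdot>\<^sub>v w = 0\<^sub>v d"
    then have "(v + t \<cdot>\<^sub>v w) $ i = 0" using i(1) by simp
    then show False using nz assms(1,2) i(1) by simp
  qed
  have "v $ i = ((v $ i + w $ i) + (v $ i - w $ i)) / 2" by simp
  then have "v $ i + w $ i \<noteq> 0 \<or> v $ i - w $ i \<noteq> 0" using i(2) by auto
  then show ?thesis
    using that[of 1] that[of "-1"] nonzero[of 1] nonzero[of "-1"] by auto
qed

lemma commuting_involutions_common_eigenvector:
  fixes P :: "'i \<Rightarrow> 'a :: field_char_0 mat"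
  assumes "finite I" "0 < d"
    and "\<And>i. i \<in> I \<Longrightarrow> P i \<in> carrier_mat d d" "\<And>i. i \<in> I \<Longrightarrow> P i * P i = 1\<^sub>m d"
    and "\<And>i j. i \<in> I \<Longrightarrow> j \<in> I \<Longrightarrow> P i * P j = P j * P i"
  shows "\<exists>v s. v \<in> carrier_vec d \<and> v \<noteq> 0\<^sub>v d \<and> (\<forall>i\<in>I. (s i = 1 \<or> s i = -1) \<and> P i *\<^sub>v v = s i \<cdot>\<^sub>v v)"
  using assms(1,3-)
proof (induction I rule: finite_induct)
  case empty
  have "unit_vec d 0 \<noteq> (0\<^sub>v d :: 'a vec)" using \<open>0 < d\<close> by simp
  then show ?case by (intro exI[of _ "unit_vec d 0"]) auto
next
  case (insert j F)
  have "\<exists>v s. v \<in> carrier_vec d \<and> v \<noteq> 0\<^sub>v d \<and> (\<forall>i\<in>F. (s i = 1 \<or> s i = -1) \<and> P i *\<^sub>v v = s i \<cdot>\<^sub>v v)"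
    by (rule insert.IH) (simp_all add: insert.prems)
  then obtain v s where v: "v \<in> carrier_vec d" "v \<noteq> 0\<^sub>v d"
    and eig: "\<forall>i\<in>F. (s i = 1 \<or> s i = -1) \<and> P i *\<^sub>v v = s i \<cdot>\<^sub>v v"
    by blast
  have Pj: "P j \<in> carrier_mat d d" "P j * P j = 1\<^sub>m d" using insert.prems by simp_all
  \<comment> \<open>\<open>v \<plusminus> P\<^sub>j v\<close> lie in the \<open>\<plusminus>1\<close>-eigenspaces of \<open>P\<^sub>j\<close> and sum to \<open>2 v \<noteq> 0\<close>.\<close>
  obtain t where t: "t = 1 \<or> t = -1" and u: "v + t \<cdot>\<^sub>v (P j *\<^sub>v v) \<noteq> 0\<^sub>v d"
    using add_or_diff_nonzero_vec[OF v(1) _ v(2), of "P j *\<^sub>v v"] Pj(1) v(1) by auto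
  let ?u = "v + t \<cdot>\<^sub>v (P j *\<^sub>v v)"
  have sign: "(s(j := t)) i = 1 \<or> (s(j := t)) i = -1" if "i \<in> insert j F" for i
    using that t eig by auto
  have eigen: "P i *\<^sub>v ?u = (s(j := t)) i \<cdot>\<^sub>v ?u" if "i \<in> insert j F" for i
  proof (cases "i = j")
    case True
    have "t * t = 1" using t by auto
    with True show ?thesis using involution_eigenvector[OF Pj v(1)] by simp
  next
    case False
    then have i: "i \<in> F" using that by simp
    have "P i *\<^sub>v ?u = s i \<cdot>\<^sub>v ?u"
      by (rule commuting_eigenvector[OF Pj(1) insert.prems(1) insert.prems(3) v(1)])
        (use i eig in auto)
    with False show ?thesis by simp
  qed
  have "?u \<in> carrier_vec d" using v(1) Pj(1) by simp
  with u sign eigen show ?case by blast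
qed

definition pure_state :: "complex vec \<Rightarrow> complex mat" where
  "pure_state v = mat (dim_vec v) (dim_vec v)
     (\<lambda>(i, j). v $ i * cnj (v $ j) / complex_of_real (\<Sum>k<dim_vec v. (cmod (v $ k))\<^sup>2))"

lemma sum_mult_cnj_eq: "(\<Sum>k<d. v $ k * cnj (v $ k)) = complex_of_real (\<Sum>k<d. (cmod (v $ k))\<^sup>2)"
  by (simp only: of_real_sum complex_norm_square)

lemma sum_cmod_squares_pos:
  assumes "v \<in> carrier_vec d" "v \<noteq> 0\<^sub>v d"
  shows "0 < (\<Sum>k<d. (cmod (v $ k))\<^sup>2)"
proof -
  have "\<exists>k<d. v $ k \<noteq> 0"
  proof (rule ccontr)
    assume "\<not> ?thesis"
    then have "v = 0\<^sub>v d" using assms(1) by (intro eq_vecI) auto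
    then show False using assms(2) by simp
  qed
  then obtain k where "k < d" "v $ k \<noteq> 0" by blast
  then have "0 < (cmod (v $ k))\<^sup>2" "(cmod (v $ k))\<^sup>2 \<le> (\<Sum>k<d. (cmod (v $ k))\<^sup>2)"
    by (auto intro: member_le_sum)
  then show ?thesis by linarith
qed

lemma density_matrix_pure_state:
  assumes v: "v \<in> carrier_vec d" "v \<noteq> 0\<^sub>v d"
  shows "density_matrix d (pure_state v)"
proof -
  define N where "N = (\<Sum>k<d. (cmod (v $ k))\<^sup>2)"
  have N: "0 < N" unfolding N_def by (rule sum_cmod_squares_pos[OF v])
  have vv: "(\<Sum>k<d. v $ k * cnj (v $ k)) = complex_of_real N"
    unfolding N_def by (rule sum_mult_cnj_eq)
  have \<rho>: "pure_state v = mat d d (\<lambda>(i, j). v $ i * cnj (v $ j) / complex_of_real N)"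
    using v(1) by (simp add: pure_state_def N_def)
  have psd: "0 \<le> Re (\<Sum>i<d. cnj (u $ i) * (pure_state v *\<^sub>v u) $ i)" if u: "u \<in> carrier_vec d" for u
  proof -
    define z where "z = (\<Sum>k<d. cnj (v $ k) * u $ k)"
    have "(pure_state v *\<^sub>v u) $ i = v $ i * z / complex_of_real N" if "i < d" for i
      using that u by (simp add: \<rho> scalar_prod_def z_def atLeast0LessThan sum_divide_distrib
          sum_distrib_left mult_ac)
    then have "(\<Sum>i<d. cnj (u $ i) * (pure_state v *\<^sub>v u) $ i) = (\<Sum>i<d. cnj (u $ i) * v $ i * z / complex_of_real N)"
      by (simp add: mult.assoc)
    also have "\<dots> = (\<Sum>i<d. cnj (u $ i) * v $ i) * z / complex_of_real N"
      by (simp only: sum_distrib_right sum_divide_distrib)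
    also have "(\<Sum>i<d. cnj (u $ i) * v $ i) = cnj z"
      by (simp add: z_def mult_ac)
    also have "cnj z * z = complex_of_real ((cmod z)\<^sup>2)"
      by (metis complex_norm_square mult.commute)
    finally show ?thesis using N by simp
  qed
  have "mtrace (pure_state v) = (\<Sum>k<d. v $ k * cnj (v $ k)) / complex_of_real N"
    by (simp add: mtrace_def \<rho> sum_divide_distrib)
  then have "mtrace (pure_state v) = 1" using N by (simp add: vv)
  with psd show ?thesis
    unfolding density_matrix_def by (simp add: \<rho>)
qed

lemma mtrace_pure_state_eigenvector:
  assumes v: "v \<in> carrier_vec d" "v \<noteq> 0\<^sub>v d" and A: "A \<in> carrier_mat d d" and eig: "A *\<^sub>v v = c \<cdot>\<^sub>v v"
  shows "mtrace (pure_state v * A) = c"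
proof -
  define N where "N = (\<Sum>k<d. (cmod (v $ k))\<^sup>2)"
  have N: "0 < N" unfolding N_def by (rule sum_cmod_squares_pos[OF v])
  have vv: "(\<Sum>k<d. v $ k * cnj (v $ k)) = complex_of_real N"
    unfolding N_def by (rule sum_mult_cnj_eq)
  have \<rho>: "pure_state v = mat d d (\<lambda>(i, j). v $ i * cnj (v $ j) / complex_of_real N)"
    using v(1) by (simp add: pure_state_def N_def)
  have row: "(\<Sum>l<d. A $$ (k, l) * v $ l) = c * v $ k" if "k < d" for k
    using arg_cong[OF eig, of "\<lambda>w. w $ k"] that A v(1) by (simp add: scalar_prod_def atLeast0LessThan)
  have "mtrace (pure_state v * A) = (\<Sum>l<d. \<Sum>k<d. v $ l * cnj (v $ k) * A $$ (k, l)) / complex_of_real N"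
    using A by (simp add: mtrace_mult[of _ d] \<rho> sum_divide_distrib)
  also have "\<dots> = (\<Sum>k<d. \<Sum>l<d. v $ l * cnj (v $ k) * A $$ (k, l)) / complex_of_real N"
    by (subst sum.swap) (rule refl)
  also have "\<dots> = (\<Sum>k<d. cnj (v $ k) * (\<Sum>l<d. A $$ (k, l) * v $ l)) / complex_of_real N"
    by (simp add: sum_distrib_left mult_ac)
  also have "\<dots> = (\<Sum>k<d. cnj (v $ k) * (c * v $ k)) / complex_of_real N"
    by (simp add: row)
  also have "\<dots> = c * (\<Sum>k<d. v $ k * cnj (v $ k)) / complex_of_real N"
    by (simp add: sum_distrib_left mult_ac)
  also have "\<dots> = c"
    using N by (simp add: vv)
  finally show ?thesis .
qed

section \<open>Bounds on beta\<close>

lemma finite_independent_sets: "finite {I. independent_set n E I}"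
  by (rule finite_subset[of _ "Pow {0..<n}"]) (auto simp: independent_set_def)

lemma sum_le_alpha: "independent_set n E I \<Longrightarrow> sum w I \<le> alpha n E w"
  unfolding alpha_def using finite_independent_sets[of n E] by (intro Max_ge) auto

lemma alpha_attained:
  obtains I where "independent_set n E I" "alpha n E w = sum w I"
proof -
  have "independent_set n E {}" by (simp add: independent_set_def)
  then have "alpha n E w \<in> {sum w I | I. independent_set n E I}"
    unfolding alpha_def using finite_independent_sets[of n E] by (intro Max_in) auto
  then show ?thesis using that by blast
qed

lemma independent_set_large_expectations:
  assumes \<rho>: "density_matrix d \<rho>"
    and P: "\<And>i. i < n \<Longrightarrow> P i \<in> carrier_mat d d" "\<And>i. i < n \<Longrightarrow> hermitian (P i)"
      "\<And>i. i < n \<Longrightarrow> P i * P i = 1\<^sub>m d"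
    and anti: "\<And>i j. i < n \<Longrightarrow> j < n \<Longrightarrow> E i j \<Longrightarrow> P i * P j = - (P j * P i)"
  shows "independent_set n E {i. i < n \<and> 1/2 < (cmod (mtrace (\<rho> * P i)))\<^sup>2}"
  unfolding independent_set_def
proof (intro conjI ballI notI)
  fix i j assume "i \<in> {i. i < n \<and> 1/2 < (cmod (mtrace (\<rho> * P i)))\<^sup>2}"
    "j \<in> {i. i < n \<and> 1/2 < (cmod (mtrace (\<rho> * P i)))\<^sup>2}" "E i j"
  moreover from this have "(cmod (mtrace (\<rho> * P i)))\<^sup>2 + (cmod (mtrace (\<rho> * P j)))\<^sup>2 \<le> 1"
    by (intro cmod_mtrace_density_matrix_anticommuting_le[OF \<rho>] P anti) simp_all
  ultimately show False by simp
qed auto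

lemma weighted_expectation_power_le_alpha:
  assumes \<rho>: "density_matrix d \<rho>"
    and P: "\<And>i. i < n \<Longrightarrow> P i \<in> carrier_mat d d" "\<And>i. i < n \<Longrightarrow> hermitian (P i)"
      "\<And>i. i < n \<Longrightarrow> P i * P i = 1\<^sub>m d"
    and anti: "\<And>i j. i < n \<Longrightarrow> j < n \<Longrightarrow> E i j \<Longrightarrow> P i * P j = - (P j * P i)"
    and w: "\<And>i. i < n \<Longrightarrow> 0 \<le> w i"
  shows "(\<Sum>i<n. w i * cmod (mtrace (\<rho> * P i)) ^ k) \<le> alpha n E w + (\<Sum>i<n. w i) * sqrt (1/2) ^ k"
proof -
  define x where "x i = cmod (mtrace (\<rho> * P i))" for i
  define J where "J = {i. i < n \<and> 1/2 < (x i)\<^sup>2}"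
  have "independent_set n E J"
    unfolding J_def x_def by (rule independent_set_large_expectations[OF \<rho> P anti])
  then have alpha: "sum w J \<le> alpha n E w" by (rule sum_le_alpha)
  have summand: "w i * x i ^ k \<le> (if i \<in> J then w i else 0) + w i * sqrt (1/2) ^ k" if i: "i < n" for i
  proof (cases "i \<in> J")
    case True
    have "x i \<le> 1" unfolding x_def by (rule cmod_mtrace_density_matrix_involution_le[OF \<rho> P[OF i]])
    then have "w i * x i ^ k \<le> w i" using w[OF i] by (simp add: x_def mult_left_le power_le_one)
    moreover have "0 \<le> w i * sqrt (1/2) ^ k" using w[OF i] by simp
    ultimately show ?thesis using True by simp
  next
    case False
    then have "x i \<le> sqrt (1/2)" using i by (simp add: J_def real_le_rsqrt)
    then have "w i * x i ^ k \<le> w i * sqrt (1/2) ^ k"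
      using w[OF i] by (simp add: x_def mult_left_mono power_mono)
    with False show ?thesis by simp
  qed
  have "(\<Sum>i<n. w i * x i ^ k) \<le> (\<Sum>i<n. (if i \<in> J then w i else 0) + w i * sqrt (1/2) ^ k)"
    by (intro sum_mono summand) simp
  also have "\<dots> = sum w J + (\<Sum>i<n. w i) * sqrt (1/2) ^ k"
  proof -
    have "{..<n} \<inter> J = J" by (auto simp: J_def)
    then show ?thesis by (simp add: sum.distrib sum_distrib_right flip: sum.inter_restrict)
  qed
  finally show ?thesis using alpha unfolding x_def by simp
qed

lemma density_matrix_alpha_le:
  assumes d: "0 < d"
    and P: "\<And>i. i < n \<Longrightarrow> P i \<in> carrier_mat d d" "\<And>i. i < n \<Longrightarrow> P i * P i = 1\<^sub>m d"
    and comm: "\<And>i j. i < n \<Longrightarrow> j < n \<Longrightarrow> \<not> E i j \<Longrightarrow> P i * P j = P j * P i"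
    and w: "\<And>i. i < n \<Longrightarrow> 0 \<le> w i"
  obtains \<rho> where "density_matrix d \<rho>" "\<And>k. alpha n E w \<le> (\<Sum>i<n. w i * cmod (mtrace (\<rho> * P i)) ^ k)"
proof -
  obtain I where I: "independent_set n E I" and alpha: "alpha n E w = sum w I"
    by (rule alpha_attained)
  have In: "I \<subseteq> {..<n}" and indep: "\<And>i j. i \<in> I \<Longrightarrow> j \<in> I \<Longrightarrow> \<not> E i j"
    using I by (auto simp: independent_set_def)
  then have "\<exists>v s. v \<in> carrier_vec d \<and> v \<noteq> 0\<^sub>v d \<and> (\<forall>i\<in>I. (s i = 1 \<or> s i = -1) \<and> P i *\<^sub>v v = s i \<cdot>\<^sub>v v)"
    by (intro commuting_involutions_common_eigenvector finite_subset[OF In] d P comm) auto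
  then obtain v s where v: "v \<in> carrier_vec d" "v \<noteq> 0\<^sub>v d"
    and eig: "\<forall>i\<in>I. (s i = 1 \<or> s i = -1) \<and> P i *\<^sub>v v = s i \<cdot>\<^sub>v v"
    by blast
  have one: "cmod (mtrace (pure_state v * P i)) = 1" if "i \<in> I" for i
  proof -
    have "i < n" using that In by auto
    moreover have "s i = 1 \<or> s i = -1" "P i *\<^sub>v v = s i \<cdot>\<^sub>v v" using eig that by auto
    ultimately show ?thesis using mtrace_pure_state_eigenvector[OF v P(1)] by auto
  qed
  have "alpha n E w \<le> (\<Sum>i<n. w i * cmod (mtrace (pure_state v * P i)) ^ k)" for k
  proof -
    have "alpha n E w = (\<Sum>i\<in>I. w i * cmod (mtrace (pure_state v * P i)) ^ k)"
      by (simp add: alpha one)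
    also have "\<dots> \<le> (\<Sum>i<n. w i * cmod (mtrace (pure_state v * P i)) ^ k)"
      using In w by (intro sum_mono2) auto
    finally show ?thesis .
  qed
  with density_matrix_pure_state[OF v] show ?thesis by (rule that)
qed

lemma realization_length: "realization n E S \<Longrightarrow> i < n \<Longrightarrow> length (S i) = length (S 0)"
  unfolding realization_def by (metis gr_zeroI less_nat_zero_code less_trans)

lemma beta_bounds:
  assumes S: "realization n E S" and w: "\<forall>i<n. 0 \<le> w i"
  shows "alpha n E w \<le> beta n S w k" "beta n S w k \<le> alpha n E w + (\<Sum>i<n. w i) * sqrt (1/2) ^ k"
proof -
  define d where "d = (2::nat) ^ length (S 0)"
  define P where "P i = pauli_string_mat (S i)" for i
  have P: "P i \<in> carrier_mat d d" "hermitian (P i)" "P i * P i = 1\<^sub>m d" if "i < n" for i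
    using pauli_string_mat_carrier[of "S i"] hermitian_pauli_string_mat[of "S i"]
      pauli_string_mat_square[of "S i"] realization_length[OF S that]
    by (simp_all add: P_def d_def)
  have anti: "P i * P j = - (P j * P i)" if "i < n" "j < n" "E i j" for i j
    using S that unfolding realization_def P_def by blast
  have comm: "P i * P j = P j * P i" if "i < n" "j < n" "\<not> E i j" for i j
    using S that unfolding realization_def P_def by blast
  define attained where "attained = {(\<Sum>i<n. w i * cmod (mtrace (\<rho> * P i)) ^ k) | \<rho>. density_matrix d \<rho>}"
  have beta: "beta n S w k = Sup attained"
    by (simp add: beta_def attained_def P_def d_def)
  have upper: "x \<le> alpha n E w + (\<Sum>i<n. w i) * sqrt (1/2) ^ k" if "x \<in> attained" for x
    using that w P anti unfolding attained_def by (auto intro!: weighted_expectation_power_le_alpha)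
  obtain \<rho> where \<rho>: "density_matrix d \<rho>" "alpha n E w \<le> (\<Sum>i<n. w i * cmod (mtrace (\<rho> * P i)) ^ k)"
    by (rule density_matrix_alpha_le[of d n P E w]) (use P comm w in \<open>auto simp: d_def\<close>)
  then have "(\<Sum>i<n. w i * cmod (mtrace (\<rho> * P i)) ^ k) \<in> attained" by (auto simp: attained_def)
  then show "alpha n E w \<le> beta n S w k"
    unfolding beta using \<rho>(2) upper by (meson bdd_aboveI cSup_upper order_trans)
  show "beta n S w k \<le> alpha n E w + (\<Sum>i<n. w i) * sqrt (1/2) ^ k"
    unfolding beta using \<open>_ \<in> attained\<close> upper by (intro cSup_least) auto
qed

theorem proposition2:
  fixes n :: nat and E :: "nat \<Rightarrow> nat \<Rightarrow> bool"
    and S :: "nat \<Rightarrow> pauli list" and w :: "nat \<Rightarrow> real"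
  assumes "is_graph n E"
    and "realization n E S"
    and "\<forall>i<n. w i \<ge> 0"
  shows "(\<lambda>k. beta n S w (Suc k)) \<longlonglongrightarrow> alpha n E w"
proof (rule tendsto_sandwich)
  show "\<forall>\<^sub>F k in sequentially. alpha n E w \<le> beta n S w (Suc k)"
    by (intro always_eventually allI beta_bounds(1)[OF assms(2,3)])
  show "\<forall>\<^sub>F k in sequentially. beta n S w (Suc k) \<le> alpha n E w + (\<Sum>i<n. w i) * sqrt (1/2) ^ Suc k"
    by (intro always_eventually allI beta_bounds(2)[OF assms(2,3)])
  have "(\<lambda>k. sqrt (1/2) ^ Suc k) \<longlonglongrightarrow> (0::real)"
    by (intro LIMSEQ_Suc LIMSEQ_power_zero) simp
  then show "(\<lambda>k. alpha n E w + (\<Sum>i<n. w i) * sqrt (1/2) ^ Suc k) \<longlonglongrightarrow> alpha n E w"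
    by (auto intro!: tendsto_eq_intros)
qed simp

end
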